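(* Let $s(t)$, $F_\mu$ be as in the context. Put $s_i=s(t_i)$ ($i=1,2$) and define the power series in $t_1,t_2$ \[ m=\frac{s_1-s_2}{t_1-t_2},\qquad b=\frac{t_1s_2-t_2s_1}{t_1-t_2},\qquad n=m+t_1t_2\,\frac{1+\mu_2m+\mu_4m^2+\mu_6m^3}{1-\mu_3b-\mu_6b^2}. \] Then \[ F_\mu(t_1,t_2)=\Big(t_1+t_2-\mu_1t_1t_2-\mu_3\big((t_1+t_2)b+t_1t_2m\big)-\mu_4t_1t_2b-\mu_6b\big((t_1+t_2)b+2t_1t_2m\big)\Big)\cdot\frac{1+\mu_2m+\mu_4m^2+\mu_6m^3}{(1+\mu_2n+\mu_4n^2+\mu_6n^3)(1-\mu_3b-\mu_6b^2)^2}. \]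
   Context: Let $\mu_1,\mu_2,\mu_3,\mu_4,\mu_6$ be independent indeterminates, $E=\mathbb{Z}[\mu_1,\mu_2,\mu_3,\mu_4,\mu_6]$. Consider the projective cubic $Y^2Z+\mu_1XYZ+\mu_3YZ^2=X^3+\mu_2X^2Z+\mu_4XZ^2+\mu_6Z^3$ with the chord-tangent group law: neutral element $O=(0:1:0)$, and three points sum to zero iff they are the intersection points (with multiplicity) of the curve with a line. In Tate coordinates $t=-X/Y$, $s=-Z/Y$ the curve reads $s=t^3+\mu_1ts+\mu_2t^2s+\mu_3s^2+\mu_4ts^2+\mu_6s^3$; $s(t)\in E[[t]]$ is the unique power series solution with $s(0)=0$, so points near $O$ are $(t,s(t))$. The general elliptic formal group law $F_\mu(t_1,t_2)$ is the power series giving the $t$-coordinate of $P_1+P_2$, where $P_i=(t_i,s(t_i))$. (The line through $P_1,P_2$ is $s=mt+b$; the series $n$ equals the slope $s_3/t_3$ of the line through $O$ and the third intersection point $(t_3,s_3)$ of that line with the curve.) *)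

theory Defs
  imports "HOL-Computational_Algebra.Computational_Algebra"
begin

section \<open>Coefficient ring: E = Z[mu1,mu2,mu3,mu4,mu6], embedded in its fraction field\<close>

type_synonym E = "int poly poly poly poly poly"

definition mu1 :: "E fract" where "mu1 = Fract [:[:[:[:[:0,1:]:]:]:]:] 1"
definition mu2 :: "E fract" where "mu2 = Fract [:[:[:[:0,1:]:]:]:] 1"
definition mu3 :: "E fract" where "mu3 = Fract [:[:[:0,1:]:]:] 1"
definition mu4 :: "E fract" where "mu4 = Fract [:[:0,1:]:] 1"
definition mu6 :: "E fract" where "mu6 = Fract [:0,1:] 1"

text \<open>t1 is the inner variable, t2 the outer one.\<close>

definition T1 :: "'a::comm_ring_1 fps fps" where "T1 = fps_const fps_X"
definition T2 :: "'a::comm_ring_1 fps fps" where "T2 = fps_X"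

definition cc :: "'a::comm_ring_1 \<Rightarrow> 'a fps fps" where "cc a = fps_const (fps_const a)"

definition at_t1 :: "'a::comm_ring_1 fps \<Rightarrow> 'a fps fps" where "at_t1 f = fps_const f"
definition at_t2 :: "'a::comm_ring_1 fps \<Rightarrow> 'a fps fps" where
  "at_t2 f = Abs_fps (\<lambda>n. fps_const (f $ n))"

text \<open>exact quotient in a ring (used where the divisor is not a unit, e.g. t1 - t2)\<close>
definition qdiv :: "'r::comm_ring_1 \<Rightarrow> 'r \<Rightarrow> 'r" where
  "qdiv a d = (THE q. q * d = a)"

definition tate_s :: "'a::field \<Rightarrow> 'a \<Rightarrow> 'a \<Rightarrow> 'a \<Rightarrow> 'a \<Rightarrow> 'a fps" where
  "tate_s a1 a2 a3 a4 a6 = (THE s. s $ 0 = 0 \<and>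
     s = fps_X ^ 3 + fps_const a1 * fps_X * s + fps_const a2 * fps_X ^ 2 * s
       + fps_const a3 * s ^ 2 + fps_const a4 * fps_X * s ^ 2 + fps_const a6 * s ^ 3)"

text \<open>Its roots (with multiplicity) are the t-coordinates of the intersection points.\<close>
definition line_cubic :: "'r::comm_ring_1 \<Rightarrow> 'r \<Rightarrow> 'r \<Rightarrow> 'r \<Rightarrow> 'r \<Rightarrow> 'r \<Rightarrow> 'r \<Rightarrow> 'r poly" where
  "line_cubic a1 a2 a3 a4 a6 M B =
     (let L = [:B, M:]; t = [:0, 1:] in
      t ^ 3 + smult a1 (t * L) + smult a2 (t ^ 2 * L) + smult a3 (L ^ 2)
      + smult a4 (t * L ^ 2) + smult a6 (L ^ 3) - L)"

definition third_t :: "'r::comm_ring_1 \<Rightarrow> 'r \<Rightarrow> 'r \<Rightarrow> 'r \<Rightarrow> 'r \<Rightarrow> 'r \<Rightarrow> 'r \<Rightarrow> 'r \<Rightarrow> 'r \<Rightarrow> 'r" where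
  "third_t a1 a2 a3 a4 a6 M B u v = (THE w.
     line_cubic a1 a2 a3 a4 a6 M B =
       smult (coeff (line_cubic a1 a2 a3 a4 a6 M B) 3) ([:-u, 1:] * [:-v, 1:] * [:-w, 1:]))"

definition chord_m :: "'a::field \<Rightarrow> 'a \<Rightarrow> 'a \<Rightarrow> 'a \<Rightarrow> 'a \<Rightarrow> 'a fps fps" where
  "chord_m a1 a2 a3 a4 a6 =
     (let s = tate_s a1 a2 a3 a4 a6 in qdiv (at_t1 s - at_t2 s) (T1 - T2))"

definition chord_b :: "'a::field \<Rightarrow> 'a \<Rightarrow> 'a \<Rightarrow> 'a \<Rightarrow> 'a \<Rightarrow> 'a fps fps" where
  "chord_b a1 a2 a3 a4 a6 =
     (let s = tate_s a1 a2 a3 a4 a6 in qdiv (T1 * at_t2 s - T2 * at_t1 s) (T1 - T2))"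

text \<open>P3 = (t3, s3) is the third intersection point of the chord with the curve, so
  P1 + P2 = -P3; -P3 is the third intersection point of the line through O = (0,0)
  and P3 (slope s3/t3) with the curve.\<close>
definition formal_group_F :: "'a::field \<Rightarrow> 'a \<Rightarrow> 'a \<Rightarrow> 'a \<Rightarrow> 'a \<Rightarrow> 'a fps fps" where
  "formal_group_F a1 a2 a3 a4 a6 =
     (let M = chord_m a1 a2 a3 a4 a6; B = chord_b a1 a2 a3 a4 a6;
          c = cc a1; d = cc a2; e = cc a3; f = cc a4; g = cc a6;
          t3 = third_t c d e f g M B T1 T2;
          s3 = M * t3 + B;
          N = qdiv s3 t3
      in third_t c d e f g N 0 0 t3)"

end

theory Submission
  imports Defs
begin

text \<open>The chord through \<open>P1, P2\<close> is \<open>s = m t + b\<close>. Restricted to it, the curve equation is a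
  cubic in \<open>t\<close> with roots \<open>t1, t2, t3\<close>, so Vieta's formulas give \<open>t3\<close> from the two top
  coefficients and show that \<open>(1 + \<mu>2 m + \<mu>4 m^2 + \<mu>6 m^3) t1 t2 t3 = b (1 - \<mu>3 b - \<mu>6 b^2)\<close>.
  Hence the slope \<open>s3 / t3 = m + b / t3\<close> of the line through \<open>O\<close> and \<open>P3\<close> is \<open>n\<close>, and
  \<open>F\<close> is the remaining root of the cubic cut out by the line \<open>s = n t\<close>. Eliminating \<open>t3\<close> with
  this product formula and with the relation between \<open>b\<close> and \<open>m\<close> forced by the two points
  \<open>P1, P2\<close> gives the closed form. The argument is pure algebra in an integral domain; the only
  analytic inputs are that \<open>s(t)\<close> exists (an X-adic fixed point) and starts with \<open>t^3\<close>, and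
  that the denominators have constant term 1.\<close>

section \<open>Fixed points of X-adic contractions\<close>

lemma fps_X_power_dvd_iff: "fps_X ^ n dvd (f::'a::comm_ring_1 fps) \<longleftrightarrow> (\<forall>i<n. f $ i = 0)"
proof
  assume "fps_X ^ n dvd f"
  then obtain g where "f = fps_X ^ n * g" by (elim dvdE)
  then show "\<forall>i<n. f $ i = 0" by (simp add: fps_X_power_mult_nth)
next
  assume "\<forall>i<n. f $ i = 0"
  then have "f = fps_X ^ n * fps_shift n f"
    by (intro fps_ext) (simp add: fps_X_power_mult_nth)
  then show "fps_X ^ n dvd f" by (metis dvd_triv_left)
qed

lemma fps_X_dvd_iff: "fps_X dvd (f::'a::comm_ring_1 fps) \<longleftrightarrow> f $ 0 = 0"
  using fps_X_power_dvd_iff[of 1 f] by simp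

lemma fps_eq_0_if_all_X_power_dvd: "(\<And>n. fps_X ^ n dvd (f::'a::comm_ring_1 fps)) \<Longrightarrow> f = 0"
  by (metis fps_X_power_dvd_iff fps_ext fps_zero_nth lessI)

locale fps_contraction =
  fixes \<Phi> :: "'a::comm_ring_1 fps \<Rightarrow> 'a fps"
  assumes X_dvd_image: "fps_X dvd f \<Longrightarrow> fps_X dvd \<Phi> f"
    and contracts: "fps_X dvd f \<Longrightarrow> fps_X dvd g \<Longrightarrow> fps_X ^ n dvd f - g \<Longrightarrow>
      fps_X ^ Suc n dvd \<Phi> f - \<Phi> g"
begin

lemma fixpoint_unique:
  assumes "f $ 0 = 0" "\<Phi> f = f" "g $ 0 = 0" "\<Phi> g = g"
  shows "f = g"
proof -
  have X_dvd: "fps_X dvd f" "fps_X dvd g"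
    using assms by (simp_all add: fps_X_dvd_iff)
  have "fps_X ^ n dvd f - g" for n
  proof (induction n)
    case (Suc n)
    from contracts[OF X_dvd Suc] show ?case by (simp add: assms)
  qed simp
  then show ?thesis using fps_eq_0_if_all_X_power_dvd[of "f - g"] by simp
qed

lemma iterate_X_dvd: "fps_X dvd (\<Phi> ^^ k) 0"
  by (induction k) (simp_all add: X_dvd_image)

lemma iterate_cauchy:
  assumes "k \<le> m"
  shows "fps_X ^ k dvd (\<Phi> ^^ m) 0 - (\<Phi> ^^ k) 0"
proof -
  have one_step: "fps_X ^ k dvd (\<Phi> ^^ Suc k) 0 - (\<Phi> ^^ k) 0" for k
  proof (induction k)
    case (Suc k)
    from contracts[OF iterate_X_dvd iterate_X_dvd Suc.IH] show ?case by simp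
  qed simp
  from assms show ?thesis
  proof (induction m rule: dec_induct)
    case (step m)
    have "fps_X ^ k dvd (fps_X::'a fps) ^ m" using step(1) by (simp add: le_imp_power_dvd)
    from dvd_add[OF dvd_trans[OF this one_step[of m]] step.IH] show ?case by simp
  qed simp
qed

text \<open>The fixed point is the X-adic limit of the iterates of \<open>\<Phi>\<close> starting at 0; its
  n-th coefficient is already that of the (n+1)-st iterate.\<close>
lemma fixpoint_exists: "\<exists>s. s $ 0 = 0 \<and> \<Phi> s = s"
proof -
  let ?P = "\<lambda>k. (\<Phi> ^^ k) 0"
  define s where "s = Abs_fps (\<lambda>n. ?P (Suc n) $ n)"
  have close: "fps_X ^ n dvd s - ?P n" for n
  proof -
    have "(s - ?P n) $ i = 0" if "i < n" for i
    proof -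
      have "fps_X ^ Suc i dvd ?P n - ?P (Suc i)" using that by (intro iterate_cauchy) simp
      then have "(?P n - ?P (Suc i)) $ i = 0" using fps_X_power_dvd_iff by blast
      then show ?thesis by (simp add: s_def)
    qed
    then show ?thesis by (simp add: fps_X_power_dvd_iff)
  qed
  have s0: "s $ 0 = 0" using iterate_X_dvd[of 1] by (simp add: s_def fps_X_dvd_iff)
  have "fps_X ^ n dvd \<Phi> s - s" for n
  proof -
    have "fps_X ^ Suc n dvd \<Phi> s - \<Phi> (?P n)"
      by (rule contracts[OF _ iterate_X_dvd close]) (simp add: fps_X_dvd_iff s0)
    moreover have "fps_X ^ Suc n dvd ?P (Suc n) - s"
      using close[of "Suc n"] by (metis dvd_minus_iff minus_diff_eq)
    moreover have "\<Phi> s - s = (\<Phi> s - \<Phi> (?P n)) + (?P (Suc n) - s)" by simp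
    ultimately have "fps_X ^ Suc n dvd \<Phi> s - s" by (metis dvd_add)
    then show ?thesis by (meson dvd_trans le_imp_power_dvd le_SucI order_refl)
  qed
  with s0 show ?thesis using fps_eq_0_if_all_X_power_dvd[of "\<Phi> s - s"] by auto
qed

lemma the_fixpoint:
  defines "s \<equiv> THE s. s $ 0 = 0 \<and> s = \<Phi> s"
  shows "s $ 0 = 0" "\<Phi> s = s"
proof -
  obtain s' where s': "s' $ 0 = 0" "\<Phi> s' = s'" using fixpoint_exists by blast
  have "s = s'" unfolding s_def
    by (rule the_equality) (use s' fixpoint_unique in auto)
  with s' show "s $ 0 = 0" "\<Phi> s = s" by simp_all
qed

end

definition tate_rhs :: "'a::comm_ring_1 \<Rightarrow> 'a \<Rightarrow> 'a \<Rightarrow> 'a \<Rightarrow> 'a \<Rightarrow> 'a fps \<Rightarrow> 'a fps" where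
  "tate_rhs a1 a2 a3 a4 a6 s = fps_X ^ 3 + fps_const a1 * fps_X * s + fps_const a2 * fps_X ^ 2 * s
     + fps_const a3 * s ^ 2 + fps_const a4 * fps_X * s ^ 2 + fps_const a6 * s ^ 3"

lemma tate_rhs_diff:
  "tate_rhs a1 a2 a3 a4 a6 f - tate_rhs a1 a2 a3 a4 a6 g = (f - g) *
     (fps_X * (fps_const a1 + fps_const a2 * fps_X) + (f + g) * (fps_const a3 + fps_const a4 * fps_X)
      + fps_const a6 * (f\<^sup>2 + f * g + g\<^sup>2))"
  unfolding tate_rhs_def by (simp add: algebra_simps power2_eq_square power3_eq_cube)

interpretation tate: fps_contraction "tate_rhs a1 a2 a3 a4 a6"
proof
  show "fps_X dvd tate_rhs a1 a2 a3 a4 a6 f" if "fps_X dvd f" for f :: "'a fps"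
    using that unfolding tate_rhs_def by (intro dvd_add) (auto simp: power2_eq_square power3_eq_cube)
  show "fps_X ^ Suc n dvd tate_rhs a1 a2 a3 a4 a6 f - tate_rhs a1 a2 a3 a4 a6 g"
    if "fps_X dvd f" "fps_X dvd g" "fps_X ^ n dvd f - g" for f g :: "'a fps" and n
  proof -
    have "fps_X dvd fps_X * (fps_const a1 + fps_const a2 * fps_X) + (f + g) * (fps_const a3 + fps_const a4 * fps_X)
      + fps_const a6 * (f\<^sup>2 + f * g + g\<^sup>2)"
      using that(1,2) by (intro dvd_add) (auto simp: power2_eq_square)
    from mult_dvd_mono[OF that(3) this] show ?thesis
      unfolding tate_rhs_diff by (simp add: mult.commute)
  qed
qed

lemma tate_s_fixpoint:
  "tate_s a1 a2 a3 a4 a6 $ 0 = 0" "tate_rhs a1 a2 a3 a4 a6 (tate_s a1 a2 a3 a4 a6) = tate_s a1 a2 a3 a4 a6"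
  using tate.the_fixpoint[of a1 a2 a3 a4 a6] unfolding tate_s_def tate_rhs_def by simp_all

definition tate_cubic :: "'r::comm_ring_1 \<Rightarrow> 'r \<Rightarrow> 'r \<Rightarrow> 'r \<Rightarrow> 'r \<Rightarrow> 'r \<Rightarrow> 'r \<Rightarrow> 'r" where
  "tate_cubic a1 a2 a3 a4 a6 t s = t^3 + a1*t*s + a2*t^2*s + a3*s^2 + a4*t*s^2 + a6*s^3 - s"

lemma tate_cubic_tate_s:
  "tate_cubic (fps_const a1) (fps_const a2) (fps_const a3) (fps_const a4) (fps_const a6)
     fps_X (tate_s a1 a2 a3 a4 a6) = 0"
  using tate_s_fixpoint(2)[of a1 a2 a3 a4 a6]
  unfolding tate_cubic_def tate_rhs_def by (simp add: algebra_simps)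

lemma tate_s_leading_term: "fps_X ^ 4 dvd tate_s a1 a2 a3 a4 a6 - fps_X ^ 3"
proof -
  define s where "s = tate_s a1 a2 a3 a4 a6"
  define R where "R = fps_X * (fps_const a1 + fps_const a2 * fps_X + fps_const a4 * s)
    + s * (fps_const a3 + fps_const a6 * s)"
  have s_eq: "s - fps_X ^ 3 = s * R"
    using tate_s_fixpoint(2)[of a1 a2 a3 a4 a6, folded s_def]
    unfolding tate_rhs_def R_def by (simp add: algebra_simps power2_eq_square power3_eq_cube)
  have "fps_X dvd R"
    using tate_s_fixpoint(1)[of a1 a2 a3 a4 a6, folded s_def] unfolding R_def fps_X_dvd_iff[symmetric]
    by (intro dvd_add) auto
  then have gain: "fps_X ^ Suc k dvd s - fps_X ^ 3" if "fps_X ^ k dvd s" for k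
    unfolding s_eq using mult_dvd_mono[OF that] by (simp add: mult.commute)
  have "fps_X ^ k dvd s" if "k \<le> 3" for k
    using that
  proof (induction k)
    case (Suc k)
    have "fps_X ^ Suc k dvd s - fps_X ^ 3" using Suc by (intro gain) simp
    moreover have "fps_X ^ Suc k dvd (fps_X :: 'a fps) ^ 3" using Suc.prems by (intro le_imp_power_dvd)
    ultimately show ?case by (metis diff_add_cancel dvd_add)
  qed simp
  from gain[OF this[of 3]] show ?thesis by (simp add: s_def)
qed

lemma tate_s_nth_1: "tate_s a1 a2 a3 a4 a6 $ 1 = 0"
  and tate_s_nth_3: "tate_s a1 a2 a3 a4 a6 $ 3 = 1"
  using tate_s_leading_term[of a1 a2 a3 a4 a6] unfolding fps_X_power_dvd_iff
  by (auto dest: spec[of _ 1] spec[of _ 3])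

lemma at_t1_simps [simp]:
  fixes f g :: "'a::comm_ring_1 fps"
  shows "at_t1 (f + g) = at_t1 f + at_t1 g" "at_t1 (f - g) = at_t1 f - at_t1 g"
    "at_t1 (f * g) = at_t1 f * at_t1 g" "at_t1 (f ^ n) = at_t1 f ^ n"
    "at_t1 (fps_const a) = cc a" "at_t1 fps_X = T1" "at_t1 0 = 0"
  by (simp_all add: at_t1_def cc_def T1_def)

lemma at_t2_nth [simp]: "at_t2 f $ n = fps_const (f $ n)"
  by (simp add: at_t2_def)

lemma at_t2_add [simp]: "at_t2 (f + g) = at_t2 f + at_t2 (g :: 'a::comm_ring_1 fps)"
  by (rule fps_ext) simp

lemma at_t2_diff [simp]: "at_t2 (f - g) = at_t2 f - at_t2 (g :: 'a::comm_ring_1 fps)"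
  by (rule fps_ext) simp

lemma at_t2_mult [simp]: "at_t2 (f * g) = at_t2 f * at_t2 (g :: 'a::comm_ring_1 fps)"
proof -
  have "fps_const (sum h A) = (\<Sum>x\<in>A. fps_const (h x))" for h :: "nat \<Rightarrow> 'a" and A
    by (induction A rule: infinite_finite_induct) (simp_all flip: fps_const_add)
  then show ?thesis by (intro fps_ext) (simp add: fps_mult_nth)
qed

lemma at_t2_power [simp]: "at_t2 (f ^ n) = at_t2 (f :: 'a::comm_ring_1 fps) ^ n"
proof (induction n)
  case 0
  show ?case by (rule fps_ext) simp
qed simp

lemma at_t2_0 [simp]: "at_t2 (0 :: 'a::comm_ring_1 fps) = 0"
  by (rule fps_ext) simp

lemma at_t2_const [simp]: "at_t2 (fps_const (a :: 'a::comm_ring_1)) = cc a"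
  by (rule fps_ext) (simp add: cc_def)

lemma at_t2_X [simp]: "at_t2 (fps_X :: 'a::comm_ring_1 fps) = T2"
  by (rule fps_ext) (simp add: T2_def)

lemma T1_ne_T2: "T1 \<noteq> (T2 :: 'a::comm_ring_1 fps fps)"
proof
  assume "T1 = (T2 :: 'a fps fps)"
  then have "T1 $ 1 = (T2 :: 'a fps fps) $ 1" by simp
  then show False by (simp add: T1_def T2_def)
qed

lemma T1_nonzero: "T1 \<noteq> (0 :: 'a::comm_ring_1 fps fps)"
  by (simp add: T1_def)

lemma T2_nonzero: "T2 \<noteq> (0 :: 'a::comm_ring_1 fps fps)"
  by (simp add: T2_def)

lemma fps_fps_divide_eq_iff:
  fixes F G H :: "'a::field fps fps"
  assumes "G $ 0 $ 0 \<noteq> 0"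
  shows "F / G = H \<longleftrightarrow> F = G * H"
proof -
  have "G $ 0 * inverse (G $ 0) = 1" using assms by (rule inverse_mult_eq_1')
  then have inv: "G * inverse G = 1" using fps_right_inverse by (simp add: fps_inverse_def)
  have "subdegree G = 0" using assms by (intro subdegree_eq_0) auto
  then have div: "F / G = F * inverse G" for F by (simp add: fps_divide_def)
  have "G * (F * inverse G) = F" for F
    using mult.left_commute[of G F] inv by simp
  moreover have "G * H * inverse G = H" for H
    using mult.commute[of G H] mult.assoc[of H G] inv by simp
  ultimately show ?thesis unfolding div by metis
qed

lemma fps_fps_mult_divide_cancel:
  fixes F G :: "'a::field fps fps"
  shows "G $ 0 $ 0 \<noteq> 0 \<Longrightarrow> G * (F / G) = F"
  using fps_fps_divide_eq_iff by metis

section \<open>The chord through \<open>P1\<close> and \<open>P2\<close>\<close>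

lemma tate_cubic_at_t1:
  "tate_cubic (cc a1) (cc a2) (cc a3) (cc a4) (cc a6) T1 (at_t1 (tate_s a1 a2 a3 a4 a6)) = 0"
  using arg_cong[OF tate_cubic_tate_s, of at_t1] by (simp add: tate_cubic_def)

lemma tate_cubic_at_t2:
  "tate_cubic (cc a1) (cc a2) (cc a3) (cc a4) (cc a6) T2 (at_t2 (tate_s a1 a2 a3 a4 a6)) = 0"
  using arg_cong[OF tate_cubic_tate_s, of at_t2] by (simp add: tate_cubic_def)

lemma qdiv_eqI: "d \<noteq> 0 \<Longrightarrow> q * d = a \<Longrightarrow> qdiv a d = (q :: 'r::idom)"
  unfolding qdiv_def by (rule the_equality) auto

text \<open>The coefficient of \<open>t1^i t2^j\<close> is \<open>f $ (i + j + 1)\<close>, as in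
  \<open>(t1^k - t2^k) / (t1 - t2) = \<Sum>i+j=k-1. t1^i t2^j\<close>.\<close>
definition divided_difference :: "'a::comm_ring_1 fps \<Rightarrow> 'a fps fps" where
  "divided_difference f = Abs_fps (\<lambda>n. fps_shift (n + 1) f)"

lemma divided_difference_mult: "divided_difference f * (T1 - T2) = at_t1 f - at_t2 f"
proof (rule fps_ext)
  fix n
  have "(divided_difference f * (T1 - T2)) $ n
      = fps_X * fps_shift (n + 1) f - (fps_X * divided_difference f) $ n"
    by (simp add: T1_def T2_def algebra_simps divided_difference_def)
  then show "(divided_difference f * (T1 - T2)) $ n = (at_t1 f - at_t2 f) $ n"
    by (intro fps_ext) (cases n; simp add: divided_difference_def at_t1_def)
qed

lemma divided_difference_nth_0_0: "divided_difference f $ 0 $ 0 = f $ 1"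
  by (simp add: divided_difference_def)

lemma chord_m_eq: "chord_m a1 a2 a3 a4 a6 = divided_difference (tate_s a1 a2 a3 a4 a6)"
  unfolding chord_m_def Let_def
  by (rule qdiv_eqI) (simp_all add: T1_ne_T2 divided_difference_mult)

lemma chord_intercept_mult:
  "(at_t1 (tate_s a1 a2 a3 a4 a6) - T1 * chord_m a1 a2 a3 a4 a6) * (T1 - T2)
     = T1 * at_t2 (tate_s a1 a2 a3 a4 a6) - T2 * at_t1 (tate_s a1 a2 a3 a4 a6)"
proof -
  let ?s = "tate_s a1 a2 a3 a4 a6"
  have "(at_t1 ?s - T1 * chord_m a1 a2 a3 a4 a6) * (T1 - T2)
      = at_t1 ?s * (T1 - T2) - T1 * (chord_m a1 a2 a3 a4 a6 * (T1 - T2))"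
    by (simp add: algebra_simps)
  also have "\<dots> = T1 * at_t2 ?s - T2 * at_t1 ?s"
    unfolding chord_m_eq divided_difference_mult by (simp add: algebra_simps)
  finally show ?thesis .
qed

lemma chord_b_eq: "chord_b a1 a2 a3 a4 a6 = at_t1 (tate_s a1 a2 a3 a4 a6) - T1 * chord_m a1 a2 a3 a4 a6"
  unfolding chord_b_def Let_def by (rule qdiv_eqI[OF _ chord_intercept_mult]) (simp add: T1_ne_T2)

lemma chord_on_curve_T1:
  "tate_cubic (cc a1) (cc a2) (cc a3) (cc a4) (cc a6) T1
     (chord_m a1 a2 a3 a4 a6 * T1 + chord_b a1 a2 a3 a4 a6) = 0"
proof -
  have "chord_m a1 a2 a3 a4 a6 * T1 + chord_b a1 a2 a3 a4 a6 = at_t1 (tate_s a1 a2 a3 a4 a6)"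
    by (simp add: chord_b_eq algebra_simps)
  then show ?thesis by (simp add: tate_cubic_at_t1)
qed

lemma chord_on_curve_T2:
  "tate_cubic (cc a1) (cc a2) (cc a3) (cc a4) (cc a6) T2
     (chord_m a1 a2 a3 a4 a6 * T2 + chord_b a1 a2 a3 a4 a6) = 0"
proof -
  have "chord_m a1 a2 a3 a4 a6 * T2 + chord_b a1 a2 a3 a4 a6
      = at_t1 (tate_s a1 a2 a3 a4 a6) - chord_m a1 a2 a3 a4 a6 * (T1 - T2)"
    by (simp add: chord_b_eq algebra_simps)
  then show ?thesis by (simp add: chord_m_eq divided_difference_mult tate_cubic_at_t2)
qed

lemma chord_m_nth_0_0: "chord_m a1 a2 a3 a4 a6 $ 0 $ 0 = 0"
  unfolding chord_m_eq divided_difference_nth_0_0 by (rule tate_s_nth_1)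

lemma chord_b_nth_0_0: "chord_b a1 a2 a3 a4 a6 $ 0 $ 0 = 0"
  by (simp add: chord_b_eq chord_m_nth_0_0 tate_s_fixpoint(1) at_t1_def T1_def)

text \<open>The coefficient of \<open>t1 t2^3\<close> in \<open>b (t1 - t2) = t1 s(t2) - t2 s(t1)\<close> is that of
  \<open>t^3\<close> in \<open>s\<close>.\<close>
lemma chord_b_nonzero: "chord_b a1 a2 a3 a4 a6 \<noteq> 0"
proof
  let ?s = "tate_s a1 a2 a3 a4 a6"
  assume "chord_b a1 a2 a3 a4 a6 = 0"
  then have "T1 * at_t2 ?s - T2 * at_t1 ?s = 0"
    using chord_intercept_mult[of a1 a2 a3 a4 a6] by (simp add: chord_b_eq)
  then have "(T1 * at_t2 ?s - T2 * at_t1 ?s) $ 3 $ 1 = 0" by simp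
  then show False by (simp add: T1_def T2_def at_t1_def tate_s_nth_3)
qed

lemma cubic_lead_nth_0_0:
  "M $ 0 $ 0 = 0 \<Longrightarrow> (1 + cc a2 * M + cc a4 * M^2 + cc a6 * M^3) $ 0 $ 0 = (1 :: 'a::comm_ring_1)"
  by (simp add: cc_def fps_nth_power_0)

section \<open>The third intersection point of a line\<close>

lemma poly_line_cubic: "poly (line_cubic a1 a2 a3 a4 a6 M B) x = tate_cubic a1 a2 a3 a4 a6 x (M*x + B)"
  by (simp add: line_cubic_def tate_cubic_def Let_def algebra_simps)

lemma line_cubic_coeffs: "line_cubic a1 a2 a3 a4 a6 M B =
  [: a3*B^2 + a6*B^3 - B, a1*B + 2*a3*M*B + a4*B^2 + 3*a6*M*B^2 - M,
     a1*M + a2*B + a3*M^2 + 2*a4*M*B + 3*a6*M^2*B, 1 + a2*M + a4*M^2 + a6*M^3 :]"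
  by (simp add: line_cubic_def Let_def power2_eq_square power3_eq_cube algebra_simps)

lemma cubic_factorization:
  fixes c0 c1 c2 c3 u v w :: "'r::idom"
  assumes "poly [:c0, c1, c2, c3:] u = 0" "poly [:c0, c1, c2, c3:] v = 0" "u \<noteq> v"
    and "c3 * (u + v + w) = - c2"
  shows "[:c0, c1, c2, c3:] = smult c3 ([:-u, 1:] * [:-v, 1:] * [:-w, 1:])"
proof -
  have root_u: "c0 = - (c3*u^3 + c2*u^2 + c1*u)" and root_v: "c3*v^3 + c2*v^2 + c1*v + c0 = 0"
    using assms(1,2) by (simp_all add: algebra_simps power2_eq_square power3_eq_cube eq_neg_iff_add_eq_0)
  have "(u - v) * (c3*(u^2 + u*v + v^2) + c2*(u + v) + c1) = 0"
    using root_v unfolding root_u by (simp add: algebra_simps power2_eq_square power3_eq_cube)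
  with \<open>u \<noteq> v\<close> have "c3*(u^2 + u*v + v^2) + c2*(u + v) + c1 = 0"
    by simp
  then have c1: "c1 = - c3*(u^2 + u*v + v^2) - c2*(u + v)"
    by (simp add: algebra_simps eq_neg_iff_add_eq_0)
  have c2: "c2 = - c3*(u + v + w)" using assms(4) by simp
  show ?thesis unfolding root_u c1 c2 by (simp add: algebra_simps power2_eq_square power3_eq_cube)
qed

lemma line_cubic_factorization:
  fixes a1 a2 a3 a4 a6 M B u v w :: "'r::idom"
  assumes "tate_cubic a1 a2 a3 a4 a6 u (M*u + B) = 0" "tate_cubic a1 a2 a3 a4 a6 v (M*v + B) = 0"
    and "u \<noteq> v"
    and "(1 + a2*M + a4*M^2 + a6*M^3) * (u + v + w) = - (a1*M + a2*B + a3*M^2 + 2*a4*M*B + 3*a6*M^2*B)"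
  shows "line_cubic a1 a2 a3 a4 a6 M B
    = smult (1 + a2*M + a4*M^2 + a6*M^3) ([:-u, 1:] * [:-v, 1:] * [:-w, 1:])"
  using assms unfolding line_cubic_coeffs
  by (intro cubic_factorization) (simp_all flip: line_cubic_coeffs add: poly_line_cubic)

lemma third_t_eqI:
  fixes a1 a2 a3 a4 a6 M B u v w :: "'r::idom"
  assumes "tate_cubic a1 a2 a3 a4 a6 u (M*u + B) = 0" "tate_cubic a1 a2 a3 a4 a6 v (M*v + B) = 0"
    and "u \<noteq> v" and "1 + a2*M + a4*M^2 + a6*M^3 \<noteq> 0"
    and "(1 + a2*M + a4*M^2 + a6*M^3) * (u + v + w) = - (a1*M + a2*B + a3*M^2 + 2*a4*M*B + 3*a6*M^2*B)"
  shows "third_t a1 a2 a3 a4 a6 M B u v = w"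
proof -
  let ?L = "1 + a2*M + a4*M^2 + a6*M^3"
  have lead: "coeff (line_cubic a1 a2 a3 a4 a6 M B) 3 = ?L"
    by (simp add: line_cubic_coeffs numeral_eq_Suc)
  note factor = line_cubic_factorization[OF assms(1-3,5)]
  show ?thesis unfolding third_t_def lead
  proof (rule the_equality)
    fix w' assume "line_cubic a1 a2 a3 a4 a6 M B = smult ?L ([:-u, 1:] * [:-v, 1:] * [:-w', 1:])"
    with factor assms(4) have "[:-u, 1:] * [:-v, 1:] * [:-w', 1:] = [:-u, 1:] * [:-v, 1:] * [:-w, 1:]"
      by simp
    then show "w' = w" by simp
  qed (rule factor)
qed

lemma chord_secant_identity:
  fixes a1 a2 a3 a4 a6 M B u v :: "'r::idom"
  defines "L \<equiv> 1 + a2*M + a4*M^2 + a6*M^3" and "D \<equiv> 1 - a3*B - a6*B^2"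
    and "X \<equiv> u + v - a1*u*v - a3*((u + v)*B + u*v*M) - a4*u*v*B - a6*B*((u + v)*B + 2*u*v*M)"
  assumes "tate_cubic a1 a2 a3 a4 a6 u (M*u + B) = 0" "tate_cubic a1 a2 a3 a4 a6 v (M*v + B) = 0"
    and "u \<noteq> v"
  shows "X*B + u*v*M*D + u^2*v^2*L = 0"
proof -
  have "(u - v) * (X*B + u*v*M*D + u^2*v^2*L)
      = v^2 * tate_cubic a1 a2 a3 a4 a6 u (M*u + B) - u^2 * tate_cubic a1 a2 a3 a4 a6 v (M*v + B)"
    unfolding X_def D_def L_def tate_cubic_def by (simp add: algebra_simps power2_eq_square power3_eq_cube)
  with assms(4-6) show ?thesis by simp
qed

lemma chord_tangent_identity:
  fixes a1 a2 a3 a4 a6 M B N u v w F :: "'r::idom"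
  defines "L \<equiv> 1 + a2*M + a4*M^2 + a6*M^3" and "D \<equiv> 1 - a3*B - a6*B^2"
    and "LN \<equiv> 1 + a2*N + a4*N^2 + a6*N^3"
    and "X \<equiv> u + v - a1*u*v - a3*((u + v)*B + u*v*M) - a4*u*v*B - a6*B*((u + v)*B + 2*u*v*M)"
  assumes nonzero: "u \<noteq> 0" "v \<noteq> 0" "w \<noteq> 0"
    and secant: "X*B + u*v*M*D + u^2*v^2*L = 0"
    and product: "B*D = L*u*v*w"
    and slope: "D*N = D*M + u*v*L"
    and on_curve: "w * (LN*w + a1*N + a3*N^2) = N"
    and third_root: "LN * (w + F) = - (a1*N + a3*N^2)"
  shows "LN * D^2 * F = X * L"
proof -
  have "LN * F = LN * (w + F) - LN * w" by (simp add: algebra_simps)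
  then have LN_F: "LN * F = - (a1*N + a3*N^2) - LN * w" by (simp only: third_root)
  have "w * (LN * D^2 * F) = D^2 * w * (LN * F)" by (simp add: ac_simps)
  also have "\<dots> = D^2 * w * (- (a1*N + a3*N^2) - LN * w)" by (simp only: LN_F)
  also have "\<dots> = - (D^2) * (w * (LN*w + a1*N + a3*N^2))" by (simp add: algebra_simps)
  also have "\<dots> = - (D^2) * N" by (simp only: on_curve)
  finally have lhs: "u*v * (w * (LN * D^2 * F)) = - u*v * D^2 * N" by simp
  have "u*v * (w * (X * L)) = (X*B) * D"
    by (simp add: product algebra_simps)
  also have "X*B = - (u*v*M*D + u^2*v^2*L)"
    using secant by (simp only: eq_neg_iff_add_eq_0 add.assoc)
  also have "- (u*v*M*D + u^2*v^2*L) * D = - u*v * D * (D*M + u*v*L)"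
    by (simp add: algebra_simps power2_eq_square)
  also have "\<dots> = - u*v * D^2 * N" by (simp add: slope[symmetric] power2_eq_square)
  finally have "u*v*w * (LN * D^2 * F) = u*v*w * (X * L)"
    using lhs by (simp add: mult.assoc)
  with nonzero show ?thesis by simp
qed

lemma chord_tangent_sum:
  fixes a1 a2 a3 a4 a6 M B N u v w F :: "'r::idom"
  defines "L \<equiv> 1 + a2*M + a4*M^2 + a6*M^3" and "D \<equiv> 1 - a3*B - a6*B^2"
    and "LN \<equiv> 1 + a2*N + a4*N^2 + a6*N^3"
    and "X \<equiv> u + v - a1*u*v - a3*((u + v)*B + u*v*M) - a4*u*v*B - a6*B*((u + v)*B + 2*u*v*M)"
  assumes on_u: "tate_cubic a1 a2 a3 a4 a6 u (M*u + B) = 0"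
    and on_v: "tate_cubic a1 a2 a3 a4 a6 v (M*v + B) = 0"
    and "u \<noteq> v" "u \<noteq> 0" "v \<noteq> 0" "B \<noteq> 0"
    and third: "L \<noteq> 0" "L * (u + v + w) = - (a1*M + a2*B + a3*M^2 + 2*a4*M*B + 3*a6*M^2*B)"
    and slope: "D \<noteq> 0" "D * N = D * M + u*v*L"
    and sum: "LN \<noteq> 0" "LN * (w + F) = - (a1*N + a3*N^2)"
  shows "(let t3 = third_t a1 a2 a3 a4 a6 M B u v
          in third_t a1 a2 a3 a4 a6 (qdiv (M*t3 + B) t3) 0 0 t3) = F"
    and "LN * D^2 * F = X * L"
proof -
  note factor = line_cubic_factorization[OF on_u on_v \<open>u \<noteq> v\<close> third(2)[unfolded L_def]]
  have "poly [:-w, 1:] w = 0" by simp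
  then have on_w: "tate_cubic a1 a2 a3 a4 a6 w (M*w + B) = 0"
    unfolding poly_line_cubic[symmetric] factor poly_smult poly_mult by simp
  have product: "B*D = L*u*v*w"
    using arg_cong[OF factor, of "\<lambda>p. poly p 0"]
    by (simp add: poly_line_cubic tate_cubic_def D_def L_def algebra_simps power2_eq_square power3_eq_cube)
  with \<open>B \<noteq> 0\<close> slope(1) have "w \<noteq> 0" by auto
  have "D * (N*w) = (D*N) * w" by (simp add: ac_simps)
  also have "\<dots> = D * (M*w + B)" unfolding slope(2) using product by (simp add: algebra_simps)
  finally have "D * (N*w) = D * (M*w + B)" .
  with slope(1) have on_line: "N*w = M*w + B" by simp
  have "third_t a1 a2 a3 a4 a6 M B u v = w"
    using third_t_eqI[OF on_u on_v \<open>u \<noteq> v\<close>] third unfolding L_def by blast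
  moreover have "qdiv (M*w + B) w = N"
    using on_line \<open>w \<noteq> 0\<close> by (intro qdiv_eqI) simp_all
  moreover have "third_t a1 a2 a3 a4 a6 N 0 0 w = F"
    using \<open>w \<noteq> 0\<close> on_w sum unfolding LN_def
    by (intro third_t_eqI) (simp_all add: tate_cubic_def on_line)
  ultimately show "(let t3 = third_t a1 a2 a3 a4 a6 M B u v
      in third_t a1 a2 a3 a4 a6 (qdiv (M*t3 + B) t3) 0 0 t3) = F"
    by simp
  have "w * (w * (LN*w + a1*N + a3*N^2) - N) = tate_cubic a1 a2 a3 a4 a6 w (N*w)"
    unfolding LN_def tate_cubic_def by (simp add: algebra_simps power2_eq_square power3_eq_cube)
  with on_w on_line \<open>w \<noteq> 0\<close> have "w * (LN*w + a1*N + a3*N^2) = N" by simp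
  with chord_secant_identity[OF on_u on_v \<open>u \<noteq> v\<close>] show "LN * D^2 * F = X * L"
    unfolding L_def D_def LN_def X_def
    by (intro chord_tangent_identity) (use \<open>u \<noteq> 0\<close> \<open>v \<noteq> 0\<close> \<open>w \<noteq> 0\<close> product slope sum in
      \<open>simp_all add: L_def D_def LN_def\<close>)
qed

lemma formal_group_F_eq:
  fixes a1 a2 a3 a4 a6 :: "'a::field"
  shows "(let m = chord_m a1 a2 a3 a4 a6; b = chord_b a1 a2 a3 a4 a6;
              c1 = cc a1; c2 = cc a2; c3 = cc a3; c4 = cc a4; c6 = cc a6;
              n = m + T1 * T2 * (1 + c2 * m + c4 * m ^ 2 + c6 * m ^ 3)
                    / (1 - c3 * b - c6 * b ^ 2)
          in formal_group_F a1 a2 a3 a4 a6 =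
             (T1 + T2 - c1 * T1 * T2 - c3 * ((T1 + T2) * b + T1 * T2 * m) - c4 * T1 * T2 * b
               - c6 * b * ((T1 + T2) * b + 2 * T1 * T2 * m))
             * (1 + c2 * m + c4 * m ^ 2 + c6 * m ^ 3)
             / ((1 + c2 * n + c4 * n ^ 2 + c6 * n ^ 3) * (1 - c3 * b - c6 * b ^ 2) ^ 2))"
proof -
  define M where "M = chord_m a1 a2 a3 a4 a6"
  define B where "B = chord_b a1 a2 a3 a4 a6"
  define L where "L = 1 + cc a2 * M + cc a4 * M^2 + cc a6 * M^3"
  define D where "D = 1 - cc a3 * B - cc a6 * B^2"
  define N where "N = M + T1 * T2 * L / D"
  define LN where "LN = 1 + cc a2 * N + cc a4 * N^2 + cc a6 * N^3"
  \<comment> \<open>the third roots on the chord and on the line through \<open>O\<close>, by Vieta's formula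
    for the sum of the roots\<close>
  define w where "w = - (cc a1*M + cc a2*B + cc a3*M^2 + 2*cc a4*M*B + 3*cc a6*M^2*B) / L - T1 - T2"
  define F where "F = - (cc a1*N + cc a3*N^2) / LN - w"
  have M00: "M $ 0 $ 0 = 0" unfolding M_def by (rule chord_m_nth_0_0)
  have B00: "B $ 0 $ 0 = 0" unfolding B_def by (rule chord_b_nth_0_0)
  have L00: "L $ 0 $ 0 = 1" unfolding L_def using M00 by (rule cubic_lead_nth_0_0)
  have D00: "D $ 0 $ 0 = 1" unfolding D_def using B00 by (simp add: cc_def fps_nth_power_0)
  have slope: "D * N = D * M + T1 * T2 * L"
    using D00 unfolding N_def by (simp add: distrib_left fps_fps_mult_divide_cancel)
  have "D $ 0 $ 0 * N $ 0 $ 0 = D $ 0 $ 0 * M $ 0 $ 0"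
    using arg_cong[OF slope, of "\<lambda>x. x $ 0 $ 0"] by (simp add: T1_def T2_def)
  then have "N $ 0 $ 0 = 0" using M00 D00 by simp
  then have LN00: "LN $ 0 $ 0 = 1" unfolding LN_def by (rule cubic_lead_nth_0_0)
  have third: "L * (T1 + T2 + w) = - (cc a1*M + cc a2*B + cc a3*M^2 + 2*cc a4*M*B + 3*cc a6*M^2*B)"
    using L00 unfolding w_def by (simp add: fps_fps_mult_divide_cancel)
  have sum: "LN * (w + F) = - (cc a1*N + cc a3*N^2)"
    using LN00 unfolding F_def by (simp add: fps_fps_mult_divide_cancel)
  note nonzero = T1_ne_T2 T1_nonzero T2_nonzero chord_b_nonzero[of a1 a2 a3 a4 a6, folded B_def]
  have "L \<noteq> 0" "D \<noteq> 0" "LN \<noteq> 0" using L00 D00 LN00 by auto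
  note on_curve = chord_on_curve_T1[of a1 a2 a3 a4 a6, folded M_def B_def]
    chord_on_curve_T2[of a1 a2 a3 a4 a6, folded M_def B_def]
  note sum_formula = chord_tangent_sum[OF on_curve nonzero, of w N F, folded L_def D_def LN_def,
      OF \<open>L \<noteq> 0\<close> third \<open>D \<noteq> 0\<close> slope \<open>LN \<noteq> 0\<close> sum]
  have "formal_group_F a1 a2 a3 a4 a6 = F"
    using sum_formula(1) unfolding formal_group_F_def Let_def M_def B_def .
  moreover have "(LN * D^2) $ 0 $ 0 \<noteq> 0" using LN00 D00 by (simp add: fps_nth_power_0)
  ultimately show ?thesis
    using sum_formula(2)
    unfolding Let_def M_def[symmetric] B_def[symmetric] L_def[symmetric] D_def[symmetric]
      N_def[symmetric] LN_def[symmetric]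
    by (metis fps_fps_divide_eq_iff)
qed

theorem mainTheorem1:
  shows "(let m = chord_m mu1 mu2 mu3 mu4 mu6; b = chord_b mu1 mu2 mu3 mu4 mu6;
              c1 = cc mu1; c2 = cc mu2; c3 = cc mu3; c4 = cc mu4; c6 = cc mu6;
              n = m + T1 * T2 * (1 + c2 * m + c4 * m ^ 2 + c6 * m ^ 3)
                    / (1 - c3 * b - c6 * b ^ 2)
          in formal_group_F mu1 mu2 mu3 mu4 mu6 =
             (T1 + T2 - c1 * T1 * T2 - c3 * ((T1 + T2) * b + T1 * T2 * m) - c4 * T1 * T2 * b
               - c6 * b * ((T1 + T2) * b + 2 * T1 * T2 * m))
             * (1 + c2 * m + c4 * m ^ 2 + c6 * m ^ 3)
             / ((1 + c2 * n + c4 * n ^ 2 + c6 * n ^ 3) * (1 - c3 * b - c6 * b ^ 2) ^ 2))"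
  by (rule formal_group_F_eq)

end
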